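(* As $P_1P_2P_3$ ranges over all 3-periodics of $\mathcal{E}$, the Mittenpunkt $X_9^\dagger$ of the focus-inversive triangle moves along the circle with center and radius \[C_9^\dagger=\left(-c\left(1+\frac{\rho^2}{2b^2}\right),\,0\right),\qquad R_9^\dagger=\rho^2\,\frac{2a^2-b^2-\delta}{2ab^2}.\] Moreover, the inversion of $C_9^\dagger$ in the circle of radius $\rho$ centered at $f_1$ is $\left(-\frac{a^2+b^2}{c},0\right)$.
   Context: Let $a>b>0$ and let $\mathcal{E}$ be the ellipse $x^2/a^2+y^2/b^2=1$ (the elliptic billiard). Set $c=\sqrt{a^2-b^2}$, $\delta=\sqrt{a^4-a^2b^2+b^4}$, and let the foci be $f_1=(-c,0)$, $f_2=(c,0)$. A 3-periodic is a triangle $P_1P_2P_3$ with vertices on $\mathcal{E}$ such that at each vertex the normal to $\mathcal{E}$ bisects the angle formed by the two sides meeting at that vertex; these form a one-parameter family (there is one through every point of $\mathcal{E}$). Fix $\rho>0$. The focus-inversive triangle of a 3-periodic $P_1P_2P_3$ is the triangle with vertices $P_i^\dagger=f_1+(\rho/d_{1,i})^2(P_i-f_1)$, where $d_{1,i}=|P_i-f_1|$, i.e. the inversions of the $P_i$ in the circle of radius $\rho$ centered at $f_1$. The Mittenpunkt $X_9$ of a triangle is the point of concurrence of the lines joining each excenter to the midpoint of the corresponding side (equivalently, the point with barycentric coordinates $a_s(s-a_s):b_s(s-b_s):c_s(s-c_s)$, where $a_s,b_s,c_s$ are the side lengths and $s$ the semiperimeter). *)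

theory Defs
  imports "HOL-Analysis.Analysis"
begin

type_synonym pt = "real \<times> real"

definition on_ellipse :: "real \<Rightarrow> real \<Rightarrow> pt \<Rightarrow> bool" where
  "on_ellipse a b P \<longleftrightarrow> (fst P)^2 / a^2 + (snd P)^2 / b^2 = 1"

text \<open>Outward normal direction of the ellipse at P (gradient of x^2/a^2+y^2/b^2).\<close>
definition ell_normal :: "real \<Rightarrow> real \<Rightarrow> pt \<Rightarrow> pt" where
  "ell_normal a b P = (fst P / a^2, snd P / b^2)"

definition cross2 :: "pt \<Rightarrow> pt \<Rightarrow> real" where
  "cross2 u v = fst u * snd v - snd u * fst v"

text \<open>At vertex P with neighbours Q, R: the normal line at P bisects the angle QPR,
  i.e. the sum of the unit vectors from P towards Q and towards R is parallel to the normal.\<close>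
definition normal_bisects :: "real \<Rightarrow> real \<Rightarrow> pt \<Rightarrow> pt \<Rightarrow> pt \<Rightarrow> bool" where
  "normal_bisects a b P Q R \<longleftrightarrow>
     cross2 ((1 / norm (Q - P)) *\<^sub>R (Q - P) + (1 / norm (R - P)) *\<^sub>R (R - P))
            (ell_normal a b P) = 0"

definition three_periodic :: "real \<Rightarrow> real \<Rightarrow> pt \<Rightarrow> pt \<Rightarrow> pt \<Rightarrow> bool" where
  "three_periodic a b P1 P2 P3 \<longleftrightarrow>
     on_ellipse a b P1 \<and> on_ellipse a b P2 \<and> on_ellipse a b P3 \<and>
     P1 \<noteq> P2 \<and> P2 \<noteq> P3 \<and> P1 \<noteq> P3 \<and>
     normal_bisects a b P1 P2 P3 \<and> normal_bisects a b P2 P3 P1 \<and>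
     normal_bisects a b P3 P1 P2"

definition invert :: "pt \<Rightarrow> real \<Rightarrow> pt \<Rightarrow> pt" where
  "invert Z rho P = Z + (rho / dist P Z)^2 *\<^sub>R (P - Z)"

text \<open>Mittenpunkt X9: barycentrics a_s(s-a_s) : b_s(s-b_s) : c_s(s-c_s), normalised.\<close>
definition mittenpunkt :: "pt \<Rightarrow> pt \<Rightarrow> pt \<Rightarrow> pt" where
  "mittenpunkt A B C =
    (let la = dist B C; lb = dist C A; lc = dist A B; s = (la + lb + lc) / 2;
         wa = la * (s - la); wb = lb * (s - lb); wc = lc * (s - lc)
     in (1 / (wa + wb + wc)) *\<^sub>R (wa *\<^sub>R A + wb *\<^sub>R B + wc *\<^sub>R C))"

end

theory Submission
  imports Defs
begin

(* Parametrise the ellipse by P = (a Re z, b Im z) with |z| = 1 and put r = (a + b) / c.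
   The bisector condition says that on every side of a 3-periodic the squared parameter chord
   |z_i - z_j|^2 is the same multiple 2 J of the side length.  Squaring gives one symmetric
   biquadratic relation between any two of the z_i, and Vieta's formulas yield
   e2 = -t, e1 = t w, e3 = -w with |w| = 1, where t = J^2 c^2 solves c^2 t^2 + 2 (a^2 + b^2) t = 3 c^2.
   Inversion about f1 is rational in z: it sends P to C9 + k (z / (z + r)^2 + r / (r^2 - 1)^2) for a
   real constant k, and the sides of the inverted triangle are a common factor times polynomials in
   the z_i.  With these weights the offset of the Mittenpunkt from C9 collapses to a real constant
   times w cnj(Pi) / Pi, Pi = (r + z1) (r + z2) (r + z3), whose modulus is that constant. *)

section \<open>Symmetric functions of three roots\<close>

lemma cubic_coeffs_from_roots:
  fixes z1 z2 z3 B C D :: "'a::idom"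
  assumes d12: "z1 \<noteq> z2" and d13: "z1 \<noteq> z3" and d23: "z2 \<noteq> z3"
    and h1: "z1^3 + B * z1^2 + C * z1 + D = 0"
    and h2: "z2^3 + B * z2^2 + C * z2 + D = 0"
    and h3: "z3^3 + B * z3^2 + C * z3 + D = 0"
  shows "B = -(z1 + z2 + z3)" "C = z1 * z2 + z1 * z3 + z2 * z3" "D = -(z1 * z2 * z3)"
proof -
  have "(z1 - z2) * (z1^2 + z1 * z2 + z2^2 + B * (z1 + z2) + C) = 0"
    using h1 h2 by algebra
  with d12 have g12: "z1^2 + z1 * z2 + z2^2 + B * (z1 + z2) + C = 0" by simp
  have "(z1 - z3) * (z1^2 + z1 * z3 + z3^2 + B * (z1 + z3) + C) = 0"
    using h1 h3 by algebra
  with d13 have g13: "z1^2 + z1 * z3 + z3^2 + B * (z1 + z3) + C = 0" by simp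
  have "(z2 - z3) * (z1 + z2 + z3 + B) = 0" using g12 g13 by algebra
  with d23 have "z1 + z2 + z3 + B = 0" by simp
  then show hB: "B = -(z1 + z2 + z3)" by algebra
  show hC: "C = z1 * z2 + z1 * z3 + z2 * z3" using g12 hB by algebra
  show "D = -(z1 * z2 * z3)" using h1 hB hC by algebra
qed

lemma biquadratic_roots_sum_prod:
  fixes x y y' t s :: "'a::idom"
  assumes "y \<noteq> y'"
    and "x^2 + y^2 - t * (x^2 * y^2 + 1) - 2 * s * x * y = 0"
    and "x^2 + y'^2 - t * (x^2 * y'^2 + 1) - 2 * s * x * y' = 0"
  shows "(1 - t * x^2) * (y + y') = 2 * s * x" "(1 - t * x^2) * y * y' = x^2 - t"
proof -
  have "(y - y') * ((1 - t * x^2) * (y + y') - 2 * s * x) = 0" using assms(2,3) by algebra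
  with assms(1) show "(1 - t * x^2) * (y + y') = 2 * s * x" by simp
  have "(y - y') * ((1 - t * x^2) * y * y' - (x^2 - t)) = 0" using assms(2,3) by algebra
  with assms(1) show "(1 - t * x^2) * y * y' = x^2 - t" by simp
qed

text \<open>Three distinct numbers pairwise linked by the same symmetric biquadratic are the roots of
  two cubics; comparing their coefficients pins down the elementary symmetric functions.\<close>
lemma symmetric_functions_from_biquadratic:
  fixes z1 z2 z3 t s :: "'a::field"
  defines "F \<equiv> \<lambda>x y. x^2 + y^2 - t * (x^2 * y^2 + 1) - 2 * s * x * y"
  assumes d12: "z1 \<noteq> z2" and d13: "z1 \<noteq> z3" and d23: "z2 \<noteq> z3" and t0: "t \<noteq> 0"
    and F23: "F z2 z3 = 0" and F31: "F z3 z1 = 0" and F12: "F z1 z2 = 0"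
  shows "z1 * z2 + z1 * z3 + z2 * z3 = - t" "z1 + z2 + z3 = - t * (z1 * z2 * z3)"
    "t^2 = 1 + 2 * s"
proof -
  have F_sym: "F y x = F x y" for x y unfolding F_def by (simp add: algebra_simps)
  have F21: "F z2 z1 = 0" and F13: "F z1 z3 = 0" and F32: "F z3 z2 = 0"
    using F12 F31 F23 F_sym by metis+
  note pr1 = biquadratic_roots_sum_prod[OF d23 F12[unfolded F_def] F13[unfolded F_def]]
  note pr2 = biquadratic_roots_sum_prod[OF d13[symmetric] F23[unfolded F_def] F21[unfolded F_def]]
  note pr3 = biquadratic_roots_sum_prod[OF d12 F31[unfolded F_def] F32[unfolded F_def]]
  define e1 e2 e3 where "e1 = z1 + z2 + z3" "e2 = z1 * z2 + z1 * z3 + z2 * z3" "e3 = z1 * z2 * z3"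
  have h1: "z1^3 + (t * e3) * z1^2 + (- t) * z1 + (- e3) = 0" using pr1(2) unfolding e1_e2_e3_def by algebra
  have h2: "z2^3 + (t * e3) * z2^2 + (- t) * z2 + (- e3) = 0" using pr2(2) unfolding e1_e2_e3_def by algebra
  have h3: "z3^3 + (t * e3) * z3^2 + (- t) * z3 + (- e3) = 0" using pr3(2) unfolding e1_e2_e3_def by algebra
  note coeffs = cubic_coeffs_from_roots[OF d12 d13 d23 h1 h2 h3, folded e1_e2_e3_def]
  show e2: "e2 = - t" using coeffs(2) by simp
  show "e1 = - t * e3" using coeffs(1) by simp
  have g: "z^3 + (- e1) * z^2 + (- (1 + 2 * s) / t) * z + e1 / t = 0"
    if "(1 - t * z^2) * (e1 - z) = 2 * s * z" for z
  proof -
    have "t * (z^3 + (- e1) * z^2 + (- (1 + 2 * s) / t) * z + e1 / t)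
        = t * z^3 - t * e1 * z^2 - (1 + 2 * s) * z + e1"
      using t0 by (simp add: field_simps)
    also have "\<dots> = 0" using that by algebra
    finally show ?thesis using t0 by simp
  qed
  have g1: "z1^3 + (- e1) * z1^2 + (- (1 + 2 * s) / t) * z1 + e1 / t = 0"
    by (rule g) (use pr1(1) in \<open>simp add: e1_e2_e3_def add.assoc\<close>)
  have g2: "z2^3 + (- e1) * z2^2 + (- (1 + 2 * s) / t) * z2 + e1 / t = 0"
    by (rule g) (use pr2(1) in \<open>simp add: e1_e2_e3_def add.commute add.left_commute\<close>)
  have g3: "z3^3 + (- e1) * z3^2 + (- (1 + 2 * s) / t) * z3 + e1 / t = 0"
    by (rule g) (use pr3(1) in \<open>simp add: e1_e2_e3_def\<close>)
  have "- (1 + 2 * s) / t = - t"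
    using cubic_coeffs_from_roots(2)[OF d12 d13 d23 g1 g2 g3, folded e1_e2_e3_def] e2 by simp
  then show "t^2 = 1 + 2 * s" using t0 by (simp add: field_simps power2_eq_square)
qed

section \<open>Complex coordinates, inversion and the Mittenpunkt\<close>

definition complex_of_pt :: "pt \<Rightarrow> complex" where
  "complex_of_pt p = Complex (fst p) (snd p)"

lemma complex_of_pt_add: "complex_of_pt (p + q) = complex_of_pt p + complex_of_pt q"
  by (simp add: complex_of_pt_def complex_eq_iff)

lemma complex_of_pt_diff: "complex_of_pt (p - q) = complex_of_pt p - complex_of_pt q"
  by (simp add: complex_of_pt_def complex_eq_iff)

lemma complex_of_pt_scaleR: "complex_of_pt (x *\<^sub>R p) = of_real x * complex_of_pt p"
  by (simp add: complex_of_pt_def complex_eq_iff)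

lemma complex_of_pt_eq_iff: "complex_of_pt p = complex_of_pt q \<longleftrightarrow> p = q"
  by (simp add: complex_of_pt_def complex_eq_iff prod_eq_iff)

lemma dist_complex_of_pt: "dist p q = cmod (complex_of_pt p - complex_of_pt q)"
  by (cases p, cases q) (simp add: dist_norm norm_Pair cmod_def complex_of_pt_def)

lemma complex_of_pt_invert:
  assumes "P \<noteq> Z"
  shows "complex_of_pt (invert Z rho P)
       = complex_of_pt Z + of_real (rho^2) / cnj (complex_of_pt P - complex_of_pt Z)"
proof -
  define q where "q = complex_of_pt P - complex_of_pt Z"
  have q0: "q \<noteq> 0" using assms complex_of_pt_eq_iff unfolding q_def by (metis eq_iff_diff_eq_0)
  have "of_real ((rho / cmod q)^2) * q = of_real (rho^2) / cnj q"
  proof -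
    have "q * cnj q = of_real ((cmod q)^2)" by (rule complex_norm_square[symmetric])
    then show ?thesis using q0 by (simp add: field_simps power_divide)
  qed
  then show ?thesis
    unfolding invert_def dist_complex_of_pt complex_of_pt_add complex_of_pt_scaleR
      complex_of_pt_diff q_def[symmetric] by simp
qed

lemma dist_invert:
  assumes "P \<noteq> Z" "Q \<noteq> Z"
  shows "dist (invert Z rho P) (invert Z rho Q) = rho^2 * dist P Q / (dist P Z * dist Q Z)"
proof -
  define p q where "p = complex_of_pt P - complex_of_pt Z" "q = complex_of_pt Q - complex_of_pt Z"
  have p0: "p \<noteq> 0" and q0: "q \<noteq> 0"
    using assms complex_of_pt_eq_iff unfolding p_q_def by (metis eq_iff_diff_eq_0)+
  have "complex_of_pt (invert Z rho P) - complex_of_pt (invert Z rho Q)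
      = of_real (rho^2) / cnj p - of_real (rho^2) / cnj q"
    unfolding complex_of_pt_invert[OF assms(1)] complex_of_pt_invert[OF assms(2)] p_q_def by simp
  also have "\<dots> = of_real (rho^2) * cnj (q - p) / (cnj p * cnj q)"
    using p0 q0 by (simp add: field_simps)
  finally have "dist (invert Z rho P) (invert Z rho Q) = rho^2 * cmod (q - p) / (cmod p * cmod q)"
    unfolding dist_complex_of_pt
    by (simp add: norm_mult norm_divide norm_power complex_mod_cnj del: complex_cnj_diff)
  moreover have "cmod (q - p) = dist P Q" "cmod p = dist P Z" "cmod q = dist Q Z"
    unfolding p_q_def dist_complex_of_pt by (simp_all add: norm_minus_commute)
  ultimately show ?thesis by simp
qed

text \<open>The barycentric weight of the vertex opposite a side of length x; the Mittenpunkt weights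
  x (s - x) of the definition are half of it.\<close>
definition mitt_weight :: "'a::comm_ring \<Rightarrow> 'a \<Rightarrow> 'a \<Rightarrow> 'a" where
  "mitt_weight x y z = x * (y + z - x)"

lemma mittenpunkt_proportional_sides:
  fixes V1 V2 V3 :: pt and mu l1 l2 l3 :: real and lam m1 m2 m3 p :: complex
  defines "M \<equiv> mitt_weight m1 m2 m3 + mitt_weight m2 m3 m1 + mitt_weight m3 m1 m2"
  assumes sides: "dist V2 V3 = mu * l1" "dist V3 V1 = mu * l2" "dist V1 V2 = mu * l3"
    and l: "of_real l1 = lam * m1" "of_real l2 = lam * m2" "of_real l3 = lam * m3"
    and "mu \<noteq> 0" "lam \<noteq> 0" "M \<noteq> 0"
  shows "complex_of_pt (mittenpunkt V1 V2 V3) - p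
       = (mitt_weight m1 m2 m3 * (complex_of_pt V1 - p) + mitt_weight m2 m3 m1 * (complex_of_pt V2 - p)
          + mitt_weight m3 m1 m2 * (complex_of_pt V3 - p)) / M"
proof -
  define W1 W2 W3 where "W1 = mitt_weight l1 l2 l3" "W2 = mitt_weight l2 l3 l1" "W3 = mitt_weight l3 l1 l2"
  have W: "of_real W1 = lam^2 * mitt_weight m1 m2 m3" "of_real W2 = lam^2 * mitt_weight m2 m3 m1"
      "of_real W3 = lam^2 * mitt_weight m3 m1 m2"
    unfolding W1_W2_W3_def mitt_weight_def of_real_mult of_real_add of_real_diff l
    by (simp_all add: algebra_simps power2_eq_square)
  define k where "k = mu^2 / 2"
  have "mittenpunkt V1 V2 V3 = (1 / (k * W1 + k * W2 + k * W3)) *\<^sub>R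
      ((k * W1) *\<^sub>R V1 + (k * W2) *\<^sub>R V2 + (k * W3) *\<^sub>R V3)"
    unfolding mittenpunkt_def Let_def sides k_def W1_W2_W3_def mitt_weight_def
    by (simp add: field_simps power2_eq_square)
  also have "\<dots> = (1 / (W1 + W2 + W3)) *\<^sub>R (W1 *\<^sub>R V1 + W2 *\<^sub>R V2 + W3 *\<^sub>R V3)"
    using \<open>mu \<noteq> 0\<close> unfolding k_def
    by (simp add: scaleR_add_right distrib_left[symmetric] mult.assoc[symmetric])
  finally have "complex_of_pt (mittenpunkt V1 V2 V3)
      = (of_real W1 * complex_of_pt V1 + of_real W2 * complex_of_pt V2 + of_real W3 * complex_of_pt V3)
        / (of_real W1 + of_real W2 + of_real W3)"
    by (simp add: complex_of_pt_add complex_of_pt_scaleR divide_inverse mult.commute)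
  also have "\<dots> = lam^2 * (mitt_weight m1 m2 m3 * complex_of_pt V1
        + mitt_weight m2 m3 m1 * complex_of_pt V2
        + mitt_weight m3 m1 m2 * complex_of_pt V3) / (lam^2 * M)"
    unfolding W M_def by (simp add: algebra_simps)
  also have "\<dots> = (mitt_weight m1 m2 m3 * complex_of_pt V1 + mitt_weight m2 m3 m1 * complex_of_pt V2
        + mitt_weight m3 m1 m2 * complex_of_pt V3) / M"
    using \<open>lam \<noteq> 0\<close> by simp
  also have "\<dots> = p + (mitt_weight m1 m2 m3 * (complex_of_pt V1 - p)
          + mitt_weight m2 m3 m1 * (complex_of_pt V2 - p)
          + mitt_weight m3 m1 m2 * (complex_of_pt V3 - p)) / M"
    using \<open>M \<noteq> 0\<close> by (simp add: field_simps M_def)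
  finally show ?thesis by simp
qed

section \<open>Polynomials of the inverted triangle\<close>

definition inv_side :: "complex \<Rightarrow> complex \<Rightarrow> complex \<Rightarrow> complex \<Rightarrow> complex" where
  "inv_side r x y z = (y - z)^2 * (r * x + 1) * (x + r)"

definition inv_offset :: "complex \<Rightarrow> complex \<Rightarrow> complex" where
  "inv_offset r z = z / (z + r)^2 + r / (r^2 - 1)^2"

definition inv_weight_sum :: "complex \<Rightarrow> complex \<Rightarrow> complex \<Rightarrow> complex \<Rightarrow> complex" where
  "inv_weight_sum r z1 z2 z3 =
     mitt_weight (inv_side r z1 z2 z3) (inv_side r z2 z3 z1) (inv_side r z3 z1 z2)
   + mitt_weight (inv_side r z2 z3 z1) (inv_side r z3 z1 z2) (inv_side r z1 z2 z3)
   + mitt_weight (inv_side r z3 z1 z2) (inv_side r z1 z2 z3) (inv_side r z2 z3 z1)"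

definition inv_weighted_offsets :: "complex \<Rightarrow> complex \<Rightarrow> complex \<Rightarrow> complex \<Rightarrow> complex" where
  "inv_weighted_offsets r z1 z2 z3 =
     mitt_weight (inv_side r z1 z2 z3) (inv_side r z2 z3 z1) (inv_side r z3 z1 z2) * inv_offset r z1
   + mitt_weight (inv_side r z2 z3 z1) (inv_side r z3 z1 z2) (inv_side r z1 z2 z3) * inv_offset r z2
   + mitt_weight (inv_side r z3 z1 z2) (inv_side r z1 z2 z3) (inv_side r z2 z3 z1) * inv_offset r z3"

text \<open>The weighted offsets with the factor z + r of each side cancelled against the double pole
  of the offset.\<close>
definition inv_offset_numerator :: "complex \<Rightarrow> complex \<Rightarrow> complex \<Rightarrow> complex \<Rightarrow> complex" where
  "inv_offset_numerator r z1 z2 z3 =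
     (z2 - z3)^2 * (r * z1 + 1) * z1 * (inv_side r z2 z3 z1 + inv_side r z3 z1 z2 - inv_side r z1 z2 z3)
       * (z2 + r) * (z3 + r)
   + (z3 - z1)^2 * (r * z2 + 1) * z2 * (inv_side r z3 z1 z2 + inv_side r z1 z2 z3 - inv_side r z2 z3 z1)
       * (z3 + r) * (z1 + r)
   + (z1 - z2)^2 * (r * z3 + 1) * z3 * (inv_side r z1 z2 z3 + inv_side r z2 z3 z1 - inv_side r z3 z1 z2)
       * (z1 + r) * (z2 + r)"

lemma inv_weight_sum_eq:
  "inv_weight_sum r z1 z2 z3 = - ((r^2 - 1)^2 * ((z1 - z2) * (z1 - z3) * (z2 - z3))^2)"
  unfolding inv_weight_sum_def mitt_weight_def inv_side_def by algebra

lemma inv_weighted_offsets_eq: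
  assumes "z1 + r \<noteq> 0" "z2 + r \<noteq> 0" "z3 + r \<noteq> 0" "r^2 - 1 \<noteq> 0"
  shows "inv_weighted_offsets r z1 z2 z3
       = ((r^2 - 1)^2 * inv_offset_numerator r z1 z2 z3
           + r * ((r + z1) * (r + z2) * (r + z3)) * inv_weight_sum r z1 z2 z3)
         / ((r^2 - 1)^2 * ((r + z1) * (r + z2) * (r + z3)))"
proof -
  define X1 X2 X3 where
    "X1 = inv_side r z2 z3 z1 + inv_side r z3 z1 z2 - inv_side r z1 z2 z3"
    "X2 = inv_side r z3 z1 z2 + inv_side r z1 z2 z3 - inv_side r z2 z3 z1"
    "X3 = inv_side r z1 z2 z3 + inv_side r z2 z3 z1 - inv_side r z3 z1 z2"
  define Pi where "Pi = (z1 + r) * (z2 + r) * (z3 + r)"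
  have "Pi \<noteq> 0" using assms unfolding Pi_def by simp
  have cancel: "K * q * (z / q^2) = K * z * q2 * q3 / (q * q2 * q3)"
    if "q \<noteq> 0" "q2 \<noteq> 0" "q3 \<noteq> 0" for K q q2 q3 z :: complex
    using that by (simp add: field_simps power2_eq_square)
  have "inv_weighted_offsets r z1 z2 z3
      = (inv_side r z1 z2 z3 * X1 * (z1 / (z1 + r)^2) + inv_side r z2 z3 z1 * X2 * (z2 / (z2 + r)^2)
         + inv_side r z3 z1 z2 * X3 * (z3 / (z3 + r)^2))
        + inv_weight_sum r z1 z2 z3 * (r / (r^2 - 1)^2)"
    unfolding inv_weighted_offsets_def inv_weight_sum_def inv_offset_def mitt_weight_def X1_X2_X3_def
    by (simp add: algebra_simps)
  also have "\<dots> = inv_offset_numerator r z1 z2 z3 / Pi + inv_weight_sum r z1 z2 z3 * (r / (r^2 - 1)^2)"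
  proof -
    have "inv_side r z1 z2 z3 * X1 * (z1 / (z1 + r)^2)
        = (z2 - z3)^2 * (r * z1 + 1) * z1 * X1 * (z2 + r) * (z3 + r) / Pi"
      unfolding inv_side_def Pi_def
      using cancel[OF assms(1,2,3), of "(z2 - z3)^2 * (r * z1 + 1) * X1" z1] by (simp add: ac_simps)
    moreover have "inv_side r z2 z3 z1 * X2 * (z2 / (z2 + r)^2)
        = (z3 - z1)^2 * (r * z2 + 1) * z2 * X2 * (z3 + r) * (z1 + r) / Pi"
      unfolding inv_side_def Pi_def
      using cancel[OF assms(2,3,1), of "(z3 - z1)^2 * (r * z2 + 1) * X2" z2] by (simp add: ac_simps)
    moreover have "inv_side r z3 z1 z2 * X3 * (z3 / (z3 + r)^2)
        = (z1 - z2)^2 * (r * z3 + 1) * z3 * X3 * (z1 + r) * (z2 + r) / Pi"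
      unfolding inv_side_def Pi_def
      using cancel[OF assms(3,1,2), of "(z1 - z2)^2 * (r * z3 + 1) * X3" z3] by (simp add: ac_simps)
    ultimately show ?thesis
      unfolding inv_offset_numerator_def X1_X2_X3_def[symmetric] by (simp add: add_divide_distrib)
  qed
  also have "\<dots> = ((r^2 - 1)^2 * inv_offset_numerator r z1 z2 z3 + r * Pi * inv_weight_sum r z1 z2 z3)
      / ((r^2 - 1)^2 * Pi)"
    using \<open>Pi \<noteq> 0\<close> assms(4) by (simp add: field_simps)
  also have "Pi = (r + z1) * (r + z2) * (r + z3)" unfolding Pi_def by (simp add: add.commute)
  finally show ?thesis .
qed

lemma inv_offset_identity:
  fixes z1 z2 z3 r t w :: complex
  assumes "z1 * z2 + z1 * z3 + z2 * z3 = - t" "z1 + z2 + z3 = t * w" "z1 * z2 * z3 = - w"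
    and "r^2 * t^2 + (r^4 + 1) * t - 3 * r^2 = 0"
  shows "(r^2 + 1) * ((r^2 - 1)^2 * inv_offset_numerator r z1 z2 z3
            + r * ((r + z1) * (r + z2) * (r + z3)) * inv_weight_sum r z1 z2 z3)
       = - ((3 - t) * r^2 * inv_weight_sum r z1 z2 z3 * (r^3 * w + t * r^2 - t * r * w - 1))"
  using assms unfolding inv_offset_numerator_def inv_weight_sum_def mitt_weight_def inv_side_def
  by algebra

lemma inv_weighted_offsets_closed_form:
  fixes z1 z2 z3 r t w :: complex
  assumes sym: "z1 * z2 + z1 * z3 + z2 * z3 = - t" "z1 + z2 + z3 = t * w" "z1 * z2 * z3 = - w"
    and rel: "r^2 * t^2 + (r^4 + 1) * t - 3 * r^2 = 0"
    and "z1 \<noteq> z2" "z1 \<noteq> z3" "z2 \<noteq> z3"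
    and zr: "z1 + r \<noteq> 0" "z2 + r \<noteq> 0" "z3 + r \<noteq> 0" and "r^2 - 1 \<noteq> 0" "r^2 + 1 \<noteq> 0"
  shows "inv_weighted_offsets r z1 z2 z3 / inv_weight_sum r z1 z2 z3
       = - ((3 - t) * r^2 / ((r^2 + 1) * (r^2 - 1)^2))
           * (r^3 * w + t * r^2 - t * r * w - 1) / ((r + z1) * (r + z2) * (r + z3))"
proof -
  define M where "M = inv_weight_sum r z1 z2 z3"
  define Pi where "Pi = (r + z1) * (r + z2) * (r + z3)"
  have "M \<noteq> 0" using assms unfolding M_def inv_weight_sum_eq by simp
  have "Pi \<noteq> 0" using zr unfolding Pi_def by (simp add: add.commute)
  define Ps where "Ps = r^3 * w + t * r^2 - t * r * w - 1"
  have "(r^2 + 1) * ((r^2 - 1)^2 * inv_offset_numerator r z1 z2 z3 + r * Pi * M) = - ((3 - t) * r^2 * M * Ps)"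
    using inv_offset_identity[OF sym rel] unfolding M_def Pi_def Ps_def by (simp add: mult.assoc)
  then have S: "(r^2 - 1)^2 * inv_offset_numerator r z1 z2 z3 + r * Pi * M
      = - ((3 - t) * r^2 * M * Ps) / (r^2 + 1)"
    using \<open>r^2 + 1 \<noteq> 0\<close> by (simp add: field_simps)
  have "inv_weighted_offsets r z1 z2 z3 / M
      = (- ((3 - t) * r^2 * M * Ps) / (r^2 + 1)) / ((r^2 - 1)^2 * Pi) / M"
    using inv_weighted_offsets_eq[OF zr \<open>r^2 - 1 \<noteq> 0\<close>]
    unfolding M_def[symmetric] Pi_def[symmetric] S by simp
  also have "\<dots> = - ((3 - t) * r^2 / ((r^2 + 1) * (r^2 - 1)^2)) * Ps / Pi"
  proof -
    have "(- (X * M * P) / B) / (C * Q) / M = - (X / (B * C)) * P / Q"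
      if "M \<noteq> 0" "B \<noteq> 0" "C \<noteq> 0" "Q \<noteq> 0" for X M P B C Q :: complex
      using that by (simp add: field_simps)
    then show ?thesis
      using \<open>M \<noteq> 0\<close> \<open>Pi \<noteq> 0\<close> \<open>r^2 - 1 \<noteq> 0\<close> \<open>r^2 + 1 \<noteq> 0\<close>
      by (simp add: mult.assoc)
  qed
  finally show ?thesis unfolding M_def Pi_def Ps_def .
qed

lemma cmod_reciprocal_over_root_product:
  fixes r t :: real and z1 z2 z3 w :: complex
  assumes "z1 * z2 + z1 * z3 + z2 * z3 = - of_real t" "z1 + z2 + z3 = of_real t * w" "z1 * z2 * z3 = - w"
    and "cmod w = 1" and "(of_real r + z1) * (of_real r + z2) * (of_real r + z3) \<noteq> 0"
  shows "cmod ((of_real r^3 * w + of_real t * of_real r^2 - of_real t * of_real r * w - 1)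
             / ((of_real r + z1) * (of_real r + z2) * (of_real r + z3))) = 1"
proof -
  define q where "q = (of_real r + z1) * (of_real r + z2) * (of_real r + z3)"
  have "q = of_real r^3 + of_real t * w * of_real r^2 - of_real t * of_real r - w"
    using assms(1-3) unfolding q_def by algebra
  moreover have "cnj w * w = 1" using assms(4) by (metis complex_norm_square mult.commute of_real_1 power_one)
  ultimately have "of_real r^3 * w + of_real t * of_real r^2 - of_real t * of_real r * w - 1 = w * cnj q"
    by simp algebra
  then show ?thesis using assms(4,5) unfolding q_def[symmetric] by (simp add: norm_mult norm_divide)
qed

section \<open>Unit-circle parameters of a 3-periodic\<close>

definition ell_point :: "real \<Rightarrow> real \<Rightarrow> complex \<Rightarrow> pt" where
  "ell_point a b z = (a * Re z, b * Im z)"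

lemma on_ellipse_obtain_ell_point:
  assumes "a > 0" "b > 0" "on_ellipse a b P"
  obtains z where "cmod z = 1" "P = ell_point a b z"
proof
  define z where "z = Complex (fst P / a) (snd P / b)"
  have "(cmod z)^2 = 1" using assms unfolding z_def on_ellipse_def cmod_power2
    by (simp add: power_divide)
  then have "cmod z = 1 \<or> cmod z = - 1" by (simp add: power2_eq_1_iff)
  then show "cmod z = 1" using norm_ge_zero[of z] by linarith
  show "P = ell_point a b z" unfolding z_def ell_point_def using assms by (simp add: prod_eq_iff)
qed

lemma dist_ell_point:
  "dist (ell_point a b z) (ell_point a b w) = sqrt ((a * (Re z - Re w))^2 + (b * (Im z - Im w))^2)"
  by (simp add: ell_point_def dist_norm norm_Pair right_diff_distrib)

definition ell_qnorm :: "real \<Rightarrow> real \<Rightarrow> pt \<Rightarrow> real" where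
  "ell_qnorm a b u = (fst u)^2 / a^2 + (snd u)^2 / b^2"

lemma ell_qnorm_ell_point_diff:
  assumes "a \<noteq> 0" "b \<noteq> 0"
  shows "ell_qnorm a b (ell_point a b w - ell_point a b z) = (cmod (w - z))^2"
  using assms unfolding ell_qnorm_def ell_point_def cmod_power2
  by (simp add: power_divide field_simps power2_eq_square)

lemma cross2_unit_sum_inner_sq:
  fixes u v n :: pt
  assumes "u \<noteq> 0" "v \<noteq> 0" and "cross2 ((1 / norm u) *\<^sub>R u + (1 / norm v) *\<^sub>R v) n = 0"
  shows "(inner u n)^2 * (norm v)^2 = (inner v n)^2 * (norm u)^2"
proof -
  obtain ux uy vx vy nx ny where uvn: "u = (ux, uy)" "v = (vx, vy)" "n = (nx, ny)"
    by (metis prod.exhaust)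
  define nu nv where "nu = norm u" "nv = norm v"
  have nu2: "nu^2 = ux^2 + uy^2" and nv2: "nv^2 = vx^2 + vy^2"
    unfolding nu_nv_def uvn by (simp_all add: norm_Pair)
  have "nu > 0" "nv > 0" unfolding nu_nv_def using assms by simp_all
  have "((ux / nu + vx / nv) * ny - (uy / nu + vy / nv) * nx) * (nu * nv)
      = (ux * ny - uy * nx) * nv + (vx * ny - vy * nx) * nu"
    using \<open>nu > 0\<close> \<open>nv > 0\<close> by (simp add: field_simps)
  moreover have "(ux / nu + vx / nv) * ny - (uy / nu + vy / nv) * nx = 0"
    using assms(3) unfolding nu_nv_def unfolding cross2_def uvn by simp
  ultimately have "(ux * ny - uy * nx) * nv = - ((vx * ny - vy * nx) * nu)" by simp
  then have cross_sq: "(ux * ny - uy * nx)^2 * nv^2 = (vx * ny - vy * nx)^2 * nu^2"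
    by (metis power2_minus power_mult_distrib)
  have "(ux * ny - uy * nx)^2 + (ux * nx + uy * ny)^2 = nu^2 * (nx^2 + ny^2)"
    "(vx * ny - vy * nx)^2 + (vx * nx + vy * ny)^2 = nv^2 * (nx^2 + ny^2)"
    unfolding nu2 nv2 by algebra+
  with cross_sq have "(ux * nx + uy * ny)^2 * nv^2 = (vx * nx + vy * ny)^2 * nu^2" by algebra
  then show ?thesis unfolding nu_nv_def uvn by (simp add: inner_Pair)
qed

lemma inner_ell_chord_normal:
  assumes "a \<noteq> 0" "b \<noteq> 0" "on_ellipse a b P" "on_ellipse a b Q"
  shows "inner (Q - P) (ell_normal a b P) = - ell_qnorm a b (Q - P) / 2"
proof -
  obtain x y x' y' where P: "P = (x, y)" and Q: "Q = (x', y')" by (metis prod.exhaust)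
  have "x^2 / a^2 + y^2 / b^2 = 1" "x'^2 / a^2 + y'^2 / b^2 = 1"
    using assms(3,4) P Q by (simp_all add: on_ellipse_def)
  moreover have "inner (Q - P) (ell_normal a b P) = (x' * x / a^2 + y' * y / b^2) - (x^2 / a^2 + y^2 / b^2)"
    "ell_qnorm a b (Q - P) = (x'^2 / a^2 + y'^2 / b^2) - 2 * (x' * x / a^2 + y' * y / b^2)
       + (x^2 / a^2 + y^2 / b^2)"
    unfolding ell_normal_def ell_qnorm_def P Q using assms(1,2)
    by (simp_all add: inner_Pair field_simps power2_eq_square)
  ultimately show ?thesis by algebra
qed

lemma normal_bisects_ell_qnorm_ratio:
  assumes "a > 0" "b > 0" "on_ellipse a b P" "on_ellipse a b Q" "on_ellipse a b R"
    and "Q \<noteq> P" "R \<noteq> P" "normal_bisects a b P Q R"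
  shows "ell_qnorm a b (Q - P) * dist R P = ell_qnorm a b (R - P) * dist Q P"
proof -
  have ab: "a \<noteq> 0" "b \<noteq> 0" using assms(1,2) by simp_all
  have "(inner (Q - P) (ell_normal a b P))^2 * (norm (R - P))^2
      = (inner (R - P) (ell_normal a b P))^2 * (norm (Q - P))^2"
    using assms(6-8) by (intro cross2_unit_sum_inner_sq) (simp_all add: normal_bisects_def)
  then have "(ell_qnorm a b (Q - P) * dist R P)^2 = (ell_qnorm a b (R - P) * dist Q P)^2"
    unfolding inner_ell_chord_normal[OF ab assms(3,4)] inner_ell_chord_normal[OF ab assms(3,5)]
    by (simp add: dist_norm power_mult_distrib power_divide)
  moreover have "ell_qnorm a b (Q - P) * dist R P \<ge> 0" "ell_qnorm a b (R - P) * dist Q P \<ge> 0"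
    unfolding ell_qnorm_def by simp_all
  ultimately show ?thesis by (simp add: power2_eq_iff_nonneg)
qed

lemma unit_chord_relation:
  fixes z w :: complex and a b J :: real
  assumes "cmod z = 1" "cmod w = 1" "z \<noteq> w"
    and chord: "(cmod (z - w))^2 = 2 * J * dist (ell_point a b z) (ell_point a b w)"
  shows "(z - w)^2 = of_real (J^2) * (of_real a^2 * (z * w - 1)^2 - of_real b^2 * (z * w + 1)^2)"
proof -
  define u where "u = z - w"
  have "u \<noteq> 0" using assms(3) unfolding u_def by simp
  have "cnj z * z = 1" "cnj w * w = 1"
    using assms(1,2) by (metis complex_norm_square mult.commute of_real_1 power_one)+
  then have cnj_u: "cnj u * (z * w) = - u" unfolding u_def by (simp add: algebra_simps)
  have re: "complex_of_real (Re u) = (u + cnj u) / 2" by (simp add: complex_add_cnj)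
  have im: "complex_of_real ((Im u)^2) = - ((u - cnj u)^2) / 4"
  proof -
    have "(u - cnj u)^2 = (complex_of_real (2 * Im u))^2 * \<i>^2"
      by (simp add: complex_diff_cnj power_mult_distrib)
    then show ?thesis by (simp add: power_mult_distrib)
  qed
  have sq: "complex_of_real (((cmod u)^2)^2) = (u * cnj u)^2"
    by (metis complex_norm_square of_real_power)
  have "(cmod u)^2 = 2 * J * sqrt ((a * Re u)^2 + (b * Im u)^2)"
    using chord unfolding dist_ell_point u_def by simp
  then have "((cmod u)^2)^2 = 4 * J^2 * ((a * Re u)^2 + (b * Im u)^2)"
    by (simp add: power_mult_distrib)
  then have "complex_of_real (((cmod u)^2)^2)
      = 4 * of_real (J^2) * (of_real a^2 * (of_real (Re u))^2 + of_real b^2 * of_real ((Im u)^2))"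
    by (simp add: power_mult_distrib)
  then have "(u * cnj u)^2 = 4 * of_real (J^2)
      * (of_real a^2 * ((u + cnj u) / 2)^2 + of_real b^2 * (- ((u - cnj u)^2) / 4))"
    unfolding sq re im .
  also have "\<dots> = of_real (J^2) * (of_real a^2 * (u + cnj u)^2 - of_real b^2 * (u - cnj u)^2)"
    by (simp add: field_simps)
  finally have "(u * cnj u)^2 = of_real (J^2) * (of_real a^2 * (u + cnj u)^2 - of_real b^2 * (u - cnj u)^2)" .
  then have "u^2 * (u^2 - of_real (J^2) * (of_real a^2 * (z * w - 1)^2 - of_real b^2 * (z * w + 1)^2)) = 0"
    using cnj_u by algebra
  with \<open>u \<noteq> 0\<close> show ?thesis unfolding u_def by simp
qed

text \<open>By the bisector condition at two of the vertices, every side of a 3-periodic has the same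
  ratio of squared parameter chord to Euclidean length.\<close>
lemma three_periodic_params:
  assumes a: "a > 0" and b: "b > 0" and tp: "three_periodic a b P1 P2 P3"
  obtains z1 z2 z3 J where "cmod z1 = 1" "cmod z2 = 1" "cmod z3 = 1"
    "P1 = ell_point a b z1" "P2 = ell_point a b z2" "P3 = ell_point a b z3"
    "z1 \<noteq> z2" "z1 \<noteq> z3" "z2 \<noteq> z3" "J > 0"
    "(cmod (z2 - z3))^2 = 2 * J * dist P2 P3" "(cmod (z3 - z1))^2 = 2 * J * dist P3 P1"
    "(cmod (z1 - z2))^2 = 2 * J * dist P1 P2"
proof -
  have e1: "on_ellipse a b P1" and e2: "on_ellipse a b P2" and e3: "on_ellipse a b P3"
    and p12: "P1 \<noteq> P2" and p23: "P2 \<noteq> P3" and p13: "P1 \<noteq> P3"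
    and nb1: "normal_bisects a b P1 P2 P3" and nb2: "normal_bisects a b P2 P3 P1"
    using tp unfolding three_periodic_def by auto
  obtain z1 z2 z3 where z: "cmod z1 = 1" "cmod z2 = 1" "cmod z3 = 1"
    and P: "P1 = ell_point a b z1" "P2 = ell_point a b z2" "P3 = ell_point a b z3"
    using on_ellipse_obtain_ell_point[OF a b] e1 e2 e3 by metis
  have q: "ell_qnorm a b (Pj - Pi) = (cmod (zi - zj))^2"
    if "Pi = ell_point a b zi" "Pj = ell_point a b zj" for Pi Pj zi zj
    using ell_qnorm_ell_point_diff[of a b zj zi] a b that by (simp add: norm_minus_commute)
  have B1: "(cmod (z1 - z2))^2 * dist P3 P1 = (cmod (z1 - z3))^2 * dist P2 P1"
    using normal_bisects_ell_qnorm_ratio[OF a b e1 e2 e3 p12[symmetric] p13[symmetric] nb1]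
    unfolding q[OF P(1,2)] q[OF P(1,3)] .
  have B2: "(cmod (z2 - z3))^2 * dist P1 P2 = (cmod (z2 - z1))^2 * dist P3 P2"
    using normal_bisects_ell_qnorm_ratio[OF a b e2 e3 e1 p23[symmetric] p12 nb2]
    unfolding q[OF P(2,3)] q[OF P(2,1)] .
  define J where "J = (cmod (z1 - z2))^2 / (2 * dist P1 P2)"
  have "dist P1 P2 > 0" using p12 by simp
  moreover have "z1 \<noteq> z2" "z1 \<noteq> z3" "z2 \<noteq> z3" using p12 p13 p23 P by auto
  ultimately have "J > 0" unfolding J_def by simp
  have s12: "(cmod (z1 - z2))^2 = 2 * J * dist P1 P2"
    unfolding J_def using \<open>dist P1 P2 > 0\<close> by simp
  have "(cmod (z1 - z3))^2 * dist P1 P2 = (2 * J * dist P1 P3) * dist P1 P2"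
    using B1 unfolding s12 by (auto simp: dist_commute algebra_simps)
  then have s31: "(cmod (z3 - z1))^2 = 2 * J * dist P3 P1"
    using \<open>dist P1 P2 > 0\<close> by (simp add: dist_commute norm_minus_commute)
  have "(cmod (z2 - z3))^2 * dist P1 P2 = (2 * J * dist P2 P3) * dist P1 P2"
    using B2 unfolding norm_minus_commute[of z2 z1] s12 by (simp add: dist_commute algebra_simps)
  then have s23: "(cmod (z2 - z3))^2 = 2 * J * dist P2 P3" using \<open>dist P1 P2 > 0\<close> by simp
  show ?thesis using that z P \<open>z1 \<noteq> z2\<close> \<open>z1 \<noteq> z3\<close> \<open>z2 \<noteq> z3\<close> \<open>J > 0\<close> s23 s31 s12 by blast
qed

section \<open>The elliptic billiard\<close>

locale elliptic_billiard =
  fixes a b :: real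
  assumes b_lt_a: "b < a" and b_pos: "0 < b"
begin

definition c :: real where "c = sqrt (a^2 - b^2)"

definition r :: real where "r = (a + b) / c"

definition focus :: pt where "focus = (- c, 0)"

definition inv_center :: "real \<Rightarrow> pt" where
  "inv_center rho = (- c * (1 + rho^2 / (2 * b^2)), 0)"

lemma a_pos: "0 < a"
  using b_lt_a b_pos by linarith

lemma c_sq: "c^2 = a^2 - b^2"
  using b_lt_a b_pos unfolding c_def by (simp add: power_strict_mono less_imp_le)

lemma c_pos: "0 < c"
  using b_lt_a b_pos unfolding c_def by (simp add: power_strict_mono)

lemma c_lt_a: "c < a"
proof -
  have "c^2 < a^2" using c_sq b_pos by simp
  then show ?thesis using a_pos by (simp add: power_less_imp_less_base)
qed

lemma r_mult_c: "r * c = a + b"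
  using c_pos unfolding r_def by simp

lemma r_mult_diff: "r * (a - b) = c"
proof -
  have "r * (a - b) * c = c * c" using r_mult_c c_sq by (simp add: power2_eq_square algebra_simps)
  then show ?thesis using c_pos by simp
qed

lemma two_a_r: "2 * a * r = c * (r^2 + 1)"
proof -
  have "(2 * a * r) * c = (c * (r^2 + 1)) * c" using r_mult_c c_sq by algebra
  then show ?thesis using c_pos by simp
qed

lemma two_b_r: "2 * b * r = c * (r^2 - 1)"
proof -
  have "(2 * b * r) * c = (c * (r^2 - 1)) * c" using r_mult_c c_sq by algebra
  then show ?thesis using c_pos by simp
qed

lemma r_gt_1: "1 < r"
  using c_lt_a c_pos b_pos unfolding r_def by simp

lemma of_real_r_ne_zero:
  "complex_of_real r \<noteq> 0" "(complex_of_real r)^2 - 1 \<noteq> 0" "(complex_of_real r)^2 + 1 \<noteq> 0"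
proof -
  have "(complex_of_real r)^2 - 1 = of_real (r^2 - 1)" "(complex_of_real r)^2 + 1 = of_real (r^2 + 1)"
    by simp_all
  moreover have "r^2 - 1 \<noteq> 0" using r_gt_1 by (simp add: power2_eq_1_iff)
  moreover have "r^2 + 1 \<noteq> 0" using zero_le_power2[of r] by linarith
  ultimately show "(complex_of_real r)^2 - 1 \<noteq> 0" "(complex_of_real r)^2 + 1 \<noteq> 0"
    by (metis of_real_eq_0_iff)+
  show "complex_of_real r \<noteq> 0" using r_gt_1 by simp
qed

lemma focal_radius_pos:
  assumes "cmod z \<le> 1"
  shows "0 < a + c * Re z"
proof -
  have "- 1 \<le> Re z" using assms abs_Re_le_cmod[of z] by linarith
  then have "- c \<le> c * Re z"
    using c_pos by (metis mult.right_neutral mult_minus_right mult_left_mono less_imp_le)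
  then show ?thesis using c_lt_a by linarith
qed

lemma dist_ell_point_focus:
  assumes "cmod z = 1"
  shows "dist (ell_point a b z) focus = a + c * Re z"
proof -
  have z2: "(Re z)^2 + (Im z)^2 = 1" using assms by (metis cmod_power2 power_one)
  have "(dist (ell_point a b z) focus)^2 = (a * Re z + c)^2 + (b * Im z)^2"
    by (simp add: ell_point_def focus_def dist_norm norm_Pair)
  also have "\<dots> = (a + c * Re z)^2"
  proof -
    have "(b * Im z)^2 = b^2 * (1 - (Re z)^2)" using z2 by (simp add: power_mult_distrib)
    then show ?thesis using c_sq by algebra
  qed
  finally show ?thesis
    using focal_radius_pos[of z] assms by (simp add: power2_eq_iff_nonneg)
qed

lemma ell_point_ne_focus:
  assumes "cmod z = 1"
  shows "ell_point a b z \<noteq> focus"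
  using dist_ell_point_focus[OF assms] focal_radius_pos[of z] assms by auto

text \<open>This makes the inversion about the focus rational in the parameter z.\<close>
lemma cnj_ell_point_minus_focus:
  assumes "cmod z = 1"
  shows "cnj (complex_of_pt (ell_point a b z) - complex_of_pt focus) * (2 * of_real r * z)
       = of_real c * (z + of_real r)^2"
proof -
  have "cnj z * z = 1" using assms by (metis complex_norm_square mult.commute of_real_1 power_one)
  moreover have "cnj (complex_of_pt (ell_point a b z) - complex_of_pt focus)
      = of_real a * ((cnj z + z) / 2) + of_real b * ((cnj z - z) / 2) + of_real c"
    by (simp add: ell_point_def focus_def complex_of_pt_def complex_eq_iff)
  moreover have "complex_of_real r * (of_real a - of_real b) = of_real c"
    using r_mult_diff by (metis of_real_diff of_real_mult)
  moreover have "complex_of_real r * of_real c = of_real a + of_real b"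
    using r_mult_c by (metis of_real_add of_real_mult)
  ultimately show ?thesis by algebra
qed

lemma unit_plus_r_ne_zero: "cmod z = 1 \<Longrightarrow> z + of_real r \<noteq> 0"
  using r_gt_1 by (metis add_eq_0_iff norm_minus_cancel norm_of_real abs_of_pos less_irrefl
      less_trans zero_less_one)

lemma invert_ell_point:
  assumes "cmod z = 1"
  shows "complex_of_pt (invert focus rho (ell_point a b z)) - complex_of_pt (inv_center rho)
       = of_real (rho^2 * (2 * r / c)) * inv_offset (of_real r) z"
proof -
  define q where "q = cnj (complex_of_pt (ell_point a b z) - complex_of_pt focus)"
  have q: "q * (2 * of_real r * z) = of_real c * (z + of_real r)^2"
    unfolding q_def by (rule cnj_ell_point_minus_focus[OF assms])
  have "z + of_real r \<noteq> 0" using unit_plus_r_ne_zero[OF assms] .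
  with q c_pos have "q \<noteq> 0" by auto
  with q \<open>z + of_real r \<noteq> 0\<close> c_pos
  have inv_q: "1 / q = of_real (2 * r / c) * (z / (z + of_real r)^2)"
    by (simp add: field_simps)
  have "c / (2 * b^2) = (2 * r / c) * (r / (r^2 - 1)^2)"
  proof -
    have "r^2 - 1 \<noteq> 0" using r_gt_1 by (simp add: power2_eq_1_iff)
    have "(c * (r^2 - 1))^2 = (2 * b * r)^2" using two_b_r by simp
    then have "c / (2 * b^2) = 2 * r * r / (c * (r^2 - 1)^2)"
      using c_pos b_pos \<open>r^2 - 1 \<noteq> 0\<close> by (simp add: frac_eq_eq) algebra
    then show ?thesis by simp
  qed
  then have center_shift: "c * rho^2 / (2 * b^2) = rho^2 * (2 * r / c) * (r / (r^2 - 1)^2)"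
    by (metis mult.commute times_divide_eq_left mult.assoc)
  have "complex_of_pt focus = - of_real c"
    by (simp add: focus_def complex_of_pt_def complex_eq_iff)
  moreover have "complex_of_pt (inv_center rho) = - of_real c - of_real (c * rho^2 / (2 * b^2))"
    by (simp add: inv_center_def complex_of_pt_def complex_eq_iff algebra_simps)
  ultimately have "complex_of_pt (invert focus rho (ell_point a b z)) - complex_of_pt (inv_center rho)
      = of_real (rho^2) * (1 / q) + of_real (c * rho^2 / (2 * b^2))"
    using complex_of_pt_invert[OF ell_point_ne_focus[OF assms], of rho, folded q_def] by simp
  also have "\<dots> = of_real (rho^2 * (2 * r / c)) * inv_offset (of_real r) z"
    unfolding inv_q center_shift inv_offset_def by (simp add: algebra_simps)
  finally show ?thesis .
qed

lemma dist_invert_ell_points: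
  assumes "cmod z = 1" "cmod w = 1" "J \<noteq> 0"
    and chord: "(cmod (z - w))^2 = 2 * J * dist (ell_point a b z) (ell_point a b w)"
  shows "dist (invert focus rho (ell_point a b z)) (invert focus rho (ell_point a b w))
       = rho^2 * (cmod (z - w))^2 / (2 * J * (a + c * Re z) * (a + c * Re w))"
  unfolding dist_invert[OF ell_point_ne_focus[OF assms(1)] ell_point_ne_focus[OF assms(2)]]
    dist_ell_point_focus[OF assms(1)] dist_ell_point_focus[OF assms(2)] chord
  using assms(3) by simp

text \<open>Up to a factor common to all three sides, the inverted side opposite the vertex with
  parameter x is the polynomial inv_side.\<close>
lemma inv_side_eq:
  assumes x: "cmod x = 1" and y: "cmod y = 1" and y': "cmod y' = 1"
  shows "of_real ((cmod (y - y'))^2 * (a + c * Re x))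
       = - of_real c / (2 * of_real r * (x * y * y')) * inv_side (of_real r) x y y'"
proof -
  have "cnj x * x = 1" "cnj y * y = 1" "cnj y' * y' = 1"
    using x y y' by (metis complex_norm_square mult.commute of_real_1 power_one)+
  moreover have "of_real ((cmod (y - y'))^2 * (a + c * Re x))
      = (y - y') * (cnj y - cnj y') * (of_real a + of_real c * ((x + cnj x) / 2))"
  proof -
    have "complex_of_real ((cmod (y - y'))^2) = (y - y') * cnj (y - y')"
      by (rule complex_norm_square)
    moreover have "complex_of_real (Re x) = (x + cnj x) / 2" by (simp add: complex_add_cnj)
    ultimately show ?thesis by (simp only: of_real_mult of_real_add complex_cnj_diff)
  qed
  moreover have "2 * complex_of_real a * of_real r = of_real c * ((of_real r)^2 + 1)"
    using two_a_r by (metis of_real_add of_real_mult of_real_power of_real_1 of_real_numeral)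
  ultimately have "of_real ((cmod (y - y'))^2 * (a + c * Re x)) * (2 * of_real r * (x * y * y'))
      = - of_real c * inv_side (of_real r) x y y'"
    unfolding inv_side_def by algebra
  moreover have "2 * of_real r * (x * y * y') \<noteq> 0" using x y y' of_real_r_ne_zero(1) by auto
  ultimately show ?thesis by (simp add: field_simps)
qed

lemma invert_inv_center:
  assumes "rho > 0"
  shows "invert focus rho (inv_center rho) = (- (a^2 + b^2) / c, 0)"
proof -
  have shift: "inv_center rho - focus = (- (c * rho^2 / (2 * b^2)), 0)"
    unfolding inv_center_def focus_def by (simp add: algebra_simps)
  then have d: "dist (inv_center rho) focus = c * rho^2 / (2 * b^2)"
    using c_pos by (simp add: dist_norm norm_Pair)
  show ?thesis
    unfolding invert_def shift d using c_pos b_pos assms c_sq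
    by (simp add: focus_def field_simps power2_eq_square)
qed

lemma symmetric_functions_of_chords:
  assumes unit: "cmod z1 = 1" "cmod z2 = 1" "cmod z3 = 1"
    and dz: "z1 \<noteq> z2" "z1 \<noteq> z3" "z2 \<noteq> z3" and "J > 0"
    and chords: "(cmod (z2 - z3))^2 = 2 * J * dist (ell_point a b z2) (ell_point a b z3)"
      "(cmod (z3 - z1))^2 = 2 * J * dist (ell_point a b z3) (ell_point a b z1)"
      "(cmod (z1 - z2))^2 = 2 * J * dist (ell_point a b z1) (ell_point a b z2)"
  defines "t \<equiv> J^2 * c^2"
  shows "z1 * z2 + z1 * z3 + z2 * z3 = - of_real t" "z1 + z2 + z3 = - of_real t * (z1 * z2 * z3)"
    "c^2 * t^2 + 2 * (a^2 + b^2) * t = 3 * c^2"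
proof -
  define s where "s = 1 - J^2 * (a^2 + b^2)"
  have F: "x^2 + y^2 - of_real t * (x^2 * y^2 + 1) - 2 * of_real s * x * y = 0"
    if "(x - y)^2 = of_real (J^2) * (of_real a^2 * (x * y - 1)^2 - of_real b^2 * (x * y + 1)^2)"
    for x y :: complex
  proof -
    have "complex_of_real t = of_real (J^2) * (of_real a^2 - of_real b^2)"
      unfolding t_def c_sq by simp
    moreover have "complex_of_real s = 1 - of_real (J^2) * (of_real a^2 + of_real b^2)"
      unfolding s_def by simp
    ultimately show ?thesis using that by algebra
  qed
  have "complex_of_real t \<noteq> 0" using \<open>J > 0\<close> c_pos unfolding t_def by simp
  note sym = symmetric_functions_from_biquadratic[OF dz this
      F[OF unit_chord_relation[OF unit(2,3) dz(3) chords(1)]]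
      F[OF unit_chord_relation[OF unit(3,1) dz(2)[symmetric] chords(2)]]
      F[OF unit_chord_relation[OF unit(1,2) dz(1) chords(3)]]]
  show "z1 * z2 + z1 * z3 + z2 * z3 = - of_real t" "z1 + z2 + z3 = - of_real t * (z1 * z2 * z3)"
    using sym(1,2) .
  have "complex_of_real (t^2) = complex_of_real (1 + 2 * s)" using sym(3) by simp
  then have "t^2 = 1 + 2 * s" by (simp only: of_real_eq_iff)
  then show "c^2 * t^2 + 2 * (a^2 + b^2) * t = 3 * c^2" unfolding s_def t_def by algebra
qed

lemma r_quadratic:
  assumes "c^2 * t^2 + 2 * (a^2 + b^2) * t = 3 * c^2"
  shows "r^2 * t^2 + (r^4 + 1) * t - 3 * r^2 = 0"
proof -
  have "2 * r^2 * (a^2 + b^2) = c^2 * (r^4 + 1)" using two_a_r two_b_r by algebra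
  then have "c^2 * (r^2 * t^2 + (r^4 + 1) * t - 3 * r^2) = 0" using assms by algebra
  then show ?thesis using c_pos by simp
qed

lemma inverse_radius_eq:
  assumes "t > 0" and quadratic: "c^2 * t^2 + 2 * (a^2 + b^2) * t = 3 * c^2"
  shows "rho^2 * (2 * r / c) * (3 - t) * r^2 / ((r^2 + 1) * (r^2 - 1)^2)
       = rho^2 * (2 * a^2 - b^2 - sqrt (a^4 - a^2 * b^2 + b^4)) / (2 * a * b^2)"
proof -
  have "(a^2 + b^2 + t * c^2)^2 = 4 * (a^4 - a^2 * b^2 + b^4)"
    using quadratic c_sq by algebra
  then have "((a^2 + b^2 + t * c^2) / 2)^2 = a^4 - a^2 * b^2 + b^4"
    by (simp add: power_divide)
  moreover have "(a^2 + b^2 + t * c^2) / 2 \<ge> 0" using \<open>t > 0\<close> by simp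
  ultimately have "sqrt (a^4 - a^2 * b^2 + b^4) = (a^2 + b^2 + t * c^2) / 2"
    by (metis real_sqrt_abs abs_of_nonneg)
  then have "rho^2 * (2 * a^2 - b^2 - sqrt (a^4 - a^2 * b^2 + b^4)) / (2 * a * b^2)
      = rho^2 * (3 - t) * c^2 / (4 * a * b^2)"
    using c_sq a_pos b_pos by (simp add: field_simps power2_eq_square; algebra)
  moreover have "rho^2 * (2 * r / c) * (3 - t) * r^2 / ((r^2 + 1) * (r^2 - 1)^2)
      = rho^2 * (3 - t) * c^2 / (4 * a * b^2)"
  proof -
    have plus: "r^2 + 1 = 2 * a * r / c" and minus: "r^2 - 1 = 2 * b * r / c"
      using two_a_r two_b_r c_pos by (simp_all add: field_simps)
    show ?thesis
      unfolding plus minus using c_pos a_pos b_pos r_gt_1 by (simp add: field_simps power2_eq_square)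
  qed
  ultimately show ?thesis by simp
qed

lemma mittenpunkt_inverted_triangle:
  assumes "rho > 0" and unit: "cmod z1 = 1" "cmod z2 = 1" "cmod z3 = 1"
    and dz: "z1 \<noteq> z2" "z1 \<noteq> z3" "z2 \<noteq> z3" and "J > 0"
    and chords: "(cmod (z2 - z3))^2 = 2 * J * dist (ell_point a b z2) (ell_point a b z3)"
      "(cmod (z3 - z1))^2 = 2 * J * dist (ell_point a b z3) (ell_point a b z1)"
      "(cmod (z1 - z2))^2 = 2 * J * dist (ell_point a b z1) (ell_point a b z2)"
  defines "V \<equiv> \<lambda>z. invert focus rho (ell_point a b z)"
  shows "complex_of_pt (mittenpunkt (V z1) (V z2) (V z3)) - complex_of_pt (inv_center rho)
       = of_real (rho^2 * (2 * r / c))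
         * (inv_weighted_offsets (of_real r) z1 z2 z3 / inv_weight_sum (of_real r) z1 z2 z3)"
proof -
  define rr where "rr = complex_of_real r"
  define d where "d z = a + c * Re z" for z
  have d_pos: "d z > 0" if "cmod z = 1" for z using focal_radius_pos that unfolding d_def by simp
  define mu where "mu = rho^2 / (2 * J * (d z1 * d z2 * d z3))"
  define lam where "lam = - of_real c / (2 * rr * (z1 * z2 * z3))"
  have side: "dist (V y) (V y') = mu * ((cmod (y - y'))^2 * d x)"
    if "cmod x = 1" "cmod y = 1" "cmod y' = 1" "d x * d y * d y' = d z1 * d z2 * d z3"
      "(cmod (y - y'))^2 = 2 * J * dist (ell_point a b y) (ell_point a b y')" for x y y'
  proof -
    have "dist (V y) (V y') = rho^2 * (cmod (y - y'))^2 / (2 * J * d y * d y')"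
      using dist_invert_ell_points[OF that(2,3) _ that(5)] \<open>J > 0\<close> unfolding V_def d_def by simp
    then show ?thesis
      unfolding mu_def that(4)[symmetric] using d_pos[OF that(1)] d_pos[OF that(2)] d_pos[OF that(3)]
      by (simp add: field_simps)
  qed
  have dists:
    "dist (V z2) (V z3) = mu * ((cmod (z2 - z3))^2 * d z1)"
    "dist (V z3) (V z1) = mu * ((cmod (z3 - z1))^2 * d z2)"
    "dist (V z1) (V z2) = mu * ((cmod (z1 - z2))^2 * d z3)"
    using side[OF unit(1,2,3) _ chords(1)] side[OF unit(2,3,1) _ chords(2)]
      side[OF unit(3,1,2) _ chords(3)]
    by (simp_all add: ac_simps)
  have scaled_sides:
    "complex_of_real ((cmod (z2 - z3))^2 * d z1) = lam * inv_side rr z1 z2 z3"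
    "complex_of_real ((cmod (z3 - z1))^2 * d z2) = lam * inv_side rr z2 z3 z1"
    "complex_of_real ((cmod (z1 - z2))^2 * d z3) = lam * inv_side rr z3 z1 z2"
    using inv_side_eq[OF unit(1,2,3)] inv_side_eq[OF unit(2,3,1)] inv_side_eq[OF unit(3,1,2)]
    unfolding lam_def d_def rr_def by (simp_all add: ac_simps)
  have "mu \<noteq> 0" "lam \<noteq> 0"
    using assms(1) \<open>J > 0\<close> d_pos[OF unit(1)] d_pos[OF unit(2)] d_pos[OF unit(3)] unit
      of_real_r_ne_zero(1) c_pos unfolding mu_def lam_def rr_def
    by auto
  have "inv_weight_sum rr z1 z2 z3 \<noteq> 0"
    using dz of_real_r_ne_zero(2) unfolding inv_weight_sum_eq rr_def by simp
  have offset: "complex_of_pt (V z) - complex_of_pt (inv_center rho)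
      = of_real (rho^2 * (2 * r / c)) * inv_offset rr z" if "cmod z = 1" for z
    using invert_ell_point[OF that] unfolding V_def rr_def .
  show ?thesis
    using mittenpunkt_proportional_sides[OF dists scaled_sides \<open>mu \<noteq> 0\<close> \<open>lam \<noteq> 0\<close>
        \<open>inv_weight_sum rr z1 z2 z3 \<noteq> 0\<close>[unfolded inv_weight_sum_def],
        of "complex_of_pt (inv_center rho)"]
    unfolding offset[OF unit(1)] offset[OF unit(2)] offset[OF unit(3)] rr_def[symmetric]
      inv_weighted_offsets_def inv_weight_sum_def
    by (simp add: ring_distribs ac_simps)
qed

lemma dist_mittenpunkt_inverted_periodic:
  assumes "rho > 0" and tp: "three_periodic a b P1 P2 P3"
  shows "dist (mittenpunkt (invert focus rho P1) (invert focus rho P2) (invert focus rho P3))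
           (inv_center rho)
       = rho^2 * (2 * a^2 - b^2 - sqrt (a^4 - a^2 * b^2 + b^4)) / (2 * a * b^2)"
proof -
  obtain z1 z2 z3 J where unit: "cmod z1 = 1" "cmod z2 = 1" "cmod z3 = 1"
    and P: "P1 = ell_point a b z1" "P2 = ell_point a b z2" "P3 = ell_point a b z3"
    and dz: "z1 \<noteq> z2" "z1 \<noteq> z3" "z2 \<noteq> z3" and "J > 0"
    and chords: "(cmod (z2 - z3))^2 = 2 * J * dist P2 P3" "(cmod (z3 - z1))^2 = 2 * J * dist P3 P1"
      "(cmod (z1 - z2))^2 = 2 * J * dist P1 P2"
    using three_periodic_params[OF a_pos b_pos tp] by blast
  define t where "t = J^2 * c^2"
  note sym = symmetric_functions_of_chords[OF unit dz \<open>J > 0\<close> chords[unfolded P], folded t_def]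
  have "t > 0" unfolding t_def using \<open>J > 0\<close> c_pos by simp
  have "t < 3"
  proof -
    have "0 < 2 * (a^2 + b^2) * t" using \<open>t > 0\<close> a_pos by (simp add: add_pos_nonneg)
    then have "c^2 * t^2 < c^2 * 3" using sym(3) by linarith
    then have "t^2 < 3^2" using c_pos by simp
    then show ?thesis by (rule power_less_imp_less_base) simp
  qed
  define rr where "rr = complex_of_real r"
  define w where "w = - (z1 * z2 * z3)"
  define q where "q = (3 - t) * r^2 / ((r^2 + 1) * (r^2 - 1)^2)"
  define ratio where "ratio = (rr^3 * w + of_real t * rr^2 - of_real t * rr * w - 1)
      / ((rr + z1) * (rr + z2) * (rr + z3))"
  have sym': "z1 + z2 + z3 = of_real t * w" "z1 * z2 * z3 = - w" using sym(2) unfolding w_def by simp_all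
  have rel: "rr^2 * (of_real t)^2 + (rr^4 + 1) * of_real t - 3 * rr^2 = 0"
  proof -
    have "complex_of_real (r^2 * t^2 + (r^4 + 1) * t - 3 * r^2) = 0"
      using r_quadratic[OF sym(3)] by simp
    then show ?thesis unfolding rr_def by simp
  qed
  have zr: "z1 + rr \<noteq> 0" "z2 + rr \<noteq> 0" "z3 + rr \<noteq> 0"
    using unit_plus_r_ne_zero unit unfolding rr_def by simp_all
  have offset: "complex_of_pt (mittenpunkt (invert focus rho P1) (invert focus rho P2) (invert focus rho P3))
      - complex_of_pt (inv_center rho) = - (of_real (rho^2 * (2 * r / c) * q) * ratio)"
    using mittenpunkt_inverted_triangle[OF assms(1) unit dz \<open>J > 0\<close> chords[unfolded P]]
      inv_weighted_offsets_closed_form[OF sym(1) sym' rel dz zr of_real_r_ne_zero(2,3)[folded rr_def]]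
    unfolding P q_def ratio_def rr_def by (simp add: mult.assoc)
  have "cmod ratio = 1"
    unfolding ratio_def rr_def
    by (rule cmod_reciprocal_over_root_product[OF sym(1) sym'])
      (use unit zr in \<open>simp_all add: w_def norm_mult rr_def add.commute\<close>)
  moreover have "q > 0"
    using \<open>t < 3\<close> r_gt_1 unfolding q_def
    by (intro divide_pos_pos mult_pos_pos) (auto simp: power2_eq_1_iff add_pos_nonneg)
  ultimately have "dist (mittenpunkt (invert focus rho P1) (invert focus rho P2) (invert focus rho P3))
      (inv_center rho) = rho^2 * (2 * r / c) * q"
    unfolding dist_complex_of_pt offset norm_minus_cancel norm_mult norm_of_real
    using r_gt_1 c_pos assms(1) by simp
  then show ?thesis
    unfolding q_def inverse_radius_eq[OF \<open>t > 0\<close> sym(3), symmetric] by (simp add: mult.assoc)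
qed

end

theorem mainTheorem2:
  fixes a b rho :: real
  assumes "a > b" "b > 0" "rho > 0"
  defines "c \<equiv> sqrt (a^2 - b^2)"
      and "\<delta> \<equiv> sqrt (a^4 - a^2 * b^2 + b^4)"
  defines "f1 \<equiv> (- c, 0::real)"
  defines "C9 \<equiv> (- c * (1 + rho^2 / (2 * b^2)), 0::real)"
      and "R9 \<equiv> rho^2 * (2 * a^2 - b^2 - \<delta>) / (2 * a * b^2)"
  shows "(\<forall>P1 P2 P3. three_periodic a b P1 P2 P3 \<longrightarrow>
            dist (mittenpunkt (invert f1 rho P1) (invert f1 rho P2) (invert f1 rho P3)) C9 = R9)
         \<and> invert f1 rho C9 = (- (a^2 + b^2) / c, 0)"
proof -
  interpret E: elliptic_billiard a b
    using assms(1,2) by unfold_locales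
  have "E.c = c" unfolding E.c_def c_def ..
  then have "E.focus = f1" "E.inv_center rho = C9"
    unfolding E.focus_def E.inv_center_def f1_def C9_def by simp_all
  then show ?thesis
    using E.dist_mittenpunkt_inverted_periodic[OF assms(3)] E.invert_inv_center[OF assms(3)]
      \<open>E.c = c\<close> unfolding R9_def \<delta>_def by simp
qed

end
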